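(* Let $\pi=\mathcal{N}(\mu,Q^{-1})$ and $q=\mathcal{N}(\mu',\widetilde{Q}^{-1})$ be Gaussian distributions on $\mathbb{R}^p$, where $Q$ is positive definite and partitioned into blocks, and $\widetilde{Q}$ is the block-diagonal matrix having the same diagonal blocks as $Q$ and zeros elsewhere. Let $\bar{Q}=\widetilde{Q}^{-1/2}Q\widetilde{Q}^{-1/2}$. Let $k\ne\ell$ be two block indices and $v_k,v_\ell\in\mathbb{R}^p\setminus\{0\}$ vectors such that $v_k$ is zero outside block $k$ and $v_\ell$ is zero outside block $\ell$. Then $$UQF(q\Vert\pi)\le1-\frac{v_k^T\bar{Q}v_\ell}{\|v_k\|\,\|v_\ell\|}.$$
   Context: The uncertainty quantification fraction is $UQF(q\Vert\pi)=\inf_{v\in\mathbb{R}^p\setminus\{0\}}\frac{\mathrm{var}_{q}(\theta^Tv)}{\mathrm{var}_{\pi}(\theta^Tv)}$. Matrix square roots are symmetric positive definite square roots. *)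

theory Defs
  imports "HOL-Analysis.Analysis"
begin

definition posdef :: "real^'n^'n \<Rightarrow> bool" where
  "posdef A \<longleftrightarrow> transpose A = A \<and> (\<forall>x. x \<noteq> 0 \<longrightarrow> x \<bullet> (A *v x) > 0)"

definition msqrt :: "real^'n^'n \<Rightarrow> real^'n^'n" where
  "msqrt A = (THE S. posdef S \<and> S ** S = A)"

text \<open>A Gaussian distribution N(m, Sigma) on R^p, represented by its mean and covariance.\<close>
type_synonym 'n gaussian = "(real^'n) \<times> (real^'n^'n)"

definition gaussian :: "real^'n \<Rightarrow> real^'n^'n \<Rightarrow> 'n gaussian" where
  "gaussian m S = (m, S)"

text \<open>Variance of the linear functional theta^T v under theta ~ N(m, Sigma): v^T Sigma v.\<close>
definition gvar :: "'n gaussian \<Rightarrow> real^'n \<Rightarrow> real" where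
  "gvar g v = v \<bullet> (snd g *v v)"

definition UQF :: "('n::finite) gaussian \<Rightarrow> 'n gaussian \<Rightarrow> real" where
  "UQF q p = Inf {gvar q v / gvar p v | v. v \<noteq> 0}"

definition blockdiag :: "('n \<Rightarrow> 'b) \<Rightarrow> real^'n^'n \<Rightarrow> real^'n^'n" where
  "blockdiag blk Q = (\<chi> i j. if blk i = blk j then Q $ i $ j else 0)"

end

theory Submission
  imports Defs
begin

text \<open>
  Write D for the block-diagonal part of Q and S = D^(-1/2), so that Qbar = S Q S.
  Changing the sign of the coordinates of one block is a symmetric involution commuting with D,
  hence with D^(-1) and, by uniqueness of the positive definite square root, with S. So S maps
  vectors supported on a block into that block, where Q and D have the same quadratic form;
  with S D S = I this gives y^T Qbar y = |y|^2 for such y. For unit vectors a, b in the blocks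
  k and l, u = a - b therefore has |u|^2 = 2 and u^T Qbar u = 2 - 2 a^T Qbar b.
  Testing the UQF with v = S^(-1) u gives var_q = |u|^2, while the Cauchy-Schwarz inequality
  for the inner product of Q, applied to S u and v, gives var_pi >= |u|^4 / u^T Qbar u.
  So the UQF is at most the Rayleigh quotient u^T Qbar u / |u|^2 = 1 - a^T Qbar b.
\<close>

lemma matrix_inv_right:
  fixes A :: "'a::semiring_1^'n^'n"
  assumes "invertible A"
  shows "A ** matrix_inv A = mat 1"
  using someI_ex[OF assms[unfolded invertible_def]] unfolding matrix_inv_def by auto

lemma matrix_inv_left:
  fixes A :: "'a::semiring_1^'n^'n"
  assumes "invertible A"
  shows "matrix_inv A ** A = mat 1"
  using someI_ex[OF assms[unfolded invertible_def]] unfolding matrix_inv_def by auto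

lemma matrix_inv_unique:
  fixes A B :: "real^'n^'n"
  assumes AB: "A ** B = mat 1"
  shows "matrix_inv A = B"
proof -
  have inv: "invertible A"
    using AB invertible_right_inverse by blast
  have "matrix_inv A = matrix_inv A ** (A ** B)"
    by (simp add: AB)
  also have "\<dots> = B"
    by (simp add: matrix_inv_left[OF inv] matrix_mul_assoc)
  finally show ?thesis .
qed

lemma symmetric_matrix_inner:
  fixes A :: "real^'n^'n"
  assumes "transpose A = A"
  shows "x \<bullet> (A *v y) = (A *v x) \<bullet> y"
  by (metis assms dot_lmul_matrix transpose_matrix_vector)

lemma matrix_vector_mul_assoc3:
  fixes A B C :: "'a::comm_semiring_1^'n^'n"
  shows "(A ** B ** C) *v x = A *v (B *v (C *v x))"
  by (simp only: matrix_vector_mul_assoc matrix_mul_assoc)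

lemma symmetric_matrix_if_inner:
  fixes M :: "real^'n^'n"
  assumes "\<And>x y. x \<bullet> (M *v y) = (M *v x) \<bullet> y"
  shows "transpose M = M"
proof -
  have "transpose M *v x = M *v x" for x
    using assms vector_eq_rdot by (metis dot_lmul_matrix transpose_matrix_vector)
  then show ?thesis
    by (simp add: matrix_eq)
qed

lemma matrix_eq_on_spanning_set:
  fixes M N :: "real^'n^'m"
  assumes "span B = UNIV" and "\<And>u. u \<in> B \<Longrightarrow> M *v u = N *v u"
  shows "M = N"
proof -
  have "M *v x = N *v x" for x
    by (rule linear_eq_on_span[where B=B]) (use assms in auto)
  then show ?thesis
    by (simp add: matrix_eq)
qed

lemma posdef_quadratic_nonneg:
  fixes A :: "real^'n^'n"
  assumes "posdef A"
  shows "0 \<le> x \<bullet> (A *v x)"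
  using assms unfolding posdef_def by (cases "x = 0") (auto intro: less_imp_le)

lemma posdef_imp_invertible:
  fixes A :: "real^'n^'n"
  assumes "posdef A"
  shows "invertible A"
proof -
  have "A *v x = 0 \<Longrightarrow> x = 0" for x
    using assms unfolding posdef_def by (metis inner_zero_right less_irrefl)
  then show ?thesis
    using matrix_left_invertible_ker invertible_left_inverse by blast
qed

lemma posdef_matrix_inv:
  fixes A :: "real^'n^'n"
  assumes pd: "posdef A"
  shows "posdef (matrix_inv A)"
proof -
  let ?B = "matrix_inv A"
  have inv: "invertible A"
    using posdef_imp_invertible[OF pd] .
  have sym: "transpose A = A"
    using pd posdef_def by blast
  have "A ** transpose ?B = mat 1"
    by (metis inv matrix_inv_left matrix_transpose_mul sym transpose_mat)
  then have symB: "transpose ?B = ?B"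
    by (rule matrix_inv_unique[symmetric])
  have "x \<bullet> (?B *v x) > 0" if "x \<noteq> 0" for x
  proof -
    have AB: "A *v (?B *v x) = x"
      by (simp add: matrix_vector_mul_assoc matrix_inv_right[OF inv])
    then have "?B *v x \<noteq> 0"
      using that by auto
    then have "(?B *v x) \<bullet> (A *v (?B *v x)) > 0"
      using pd posdef_def by blast
    then show ?thesis
      using AB by (simp add: inner_commute)
  qed
  then show ?thesis
    using symB posdef_def by blast
qed

section \<open>Orthonormal eigenbases and square roots of positive definite matrices\<close>

lemma quadratic_nonpos_imp_linear_coeff_eq_0:
  fixes c d :: real
  assumes "\<And>t. 2 * t * c + t\<^sup>2 * d \<le> 0"
  shows "c = 0"
proof (rule ccontr)
  assume "c \<noteq> 0"
  define e where "e = \<bar>d\<bar> + 1"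
  have e: "e > 0" "2 * e + d > 0"
    unfolding e_def by auto
  have "(2 * (c / e) * c + (c / e)\<^sup>2 * d) * e\<^sup>2 = c\<^sup>2 * (2 * e + d)"
    using e by (simp add: field_simps power2_eq_square)
  moreover have "(2 * (c / e) * c + (c / e)\<^sup>2 * d) * e\<^sup>2 \<le> 0"
    using assms[of "c / e"] by (simp add: mult_nonpos_nonneg)
  moreover have "c\<^sup>2 * (2 * e + d) > 0"
    using \<open>c \<noteq> 0\<close> e by simp
  ultimately show False
    by linarith
qed

lemma quadratic_form_attains_max_on_sphere:
  fixes A :: "real^'n^'n"
  assumes W: "subspace W" and a: "a \<in> W" "a \<noteq> 0"
  shows "\<exists>x\<in>W. x \<bullet> x = 1 \<and> (\<forall>z\<in>W. z \<bullet> (A *v z) \<le> x \<bullet> (A *v x) * (z \<bullet> z))"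
proof -
  define f where "f z = z \<bullet> (A *v z)" for z
  define K where "K = W \<inter> sphere 0 1"
  have "compact K"
    unfolding K_def using W closed_subspace compact_sphere by (blast intro: closed_Int_compact)
  moreover have "(1 / norm a) *\<^sub>R a \<in> K"
    using a W unfolding K_def by (auto simp: subspace_scale)
  moreover have "continuous_on K f"
    unfolding f_def by (intro continuous_intros linear_continuous_on) (simp add: bounded_linear_def)
  ultimately obtain x where x: "x \<in> K" and max: "\<And>y. y \<in> K \<Longrightarrow> f y \<le> f x"
    using continuous_attains_sup[of K f] by blast
  have "f z \<le> f x * (z \<bullet> z)" if z: "z \<in> W" for z
  proof (cases "z = 0")
    case True
    then show ?thesis
      by (simp add: f_def)
  next
    case False
    have "(1 / norm z) *\<^sub>R z \<in> K"
      using z W False unfolding K_def by (auto simp: subspace_scale)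
    then have "f ((1 / norm z) *\<^sub>R z) \<le> f x"
      by (rule max)
    moreover have "f ((1 / norm z) *\<^sub>R z) = f z / (norm z)\<^sup>2"
      by (simp add: f_def matrix_vector_mult_scaleR power2_eq_square)
    ultimately have "f z / (norm z)\<^sup>2 \<le> f x"
      by simp
    then show ?thesis
      using False by (simp add: divide_le_eq power2_norm_eq_inner)
  qed
  then show ?thesis
    using x unfolding K_def f_def by (auto simp: norm_eq_1)
qed

lemma symmetric_matrix_rayleigh_max_eigenvector:
  fixes A :: "real^'n^'n"
  assumes sym: "transpose A = A" and W: "subspace W"
    and x: "x \<in> W" "x \<bullet> x = 1" and Ax: "A *v x \<in> W"
    and max: "\<And>z. z \<in> W \<Longrightarrow> z \<bullet> (A *v z) \<le> x \<bullet> (A *v x) * (z \<bullet> z)"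
  shows "A *v x = (x \<bullet> (A *v x)) *\<^sub>R x"
proof -
  define l where "l = x \<bullet> (A *v x)"
  define r where "r = A *v x - l *\<^sub>R x"
  have r: "r \<in> W"
    unfolding r_def using W x Ax by (simp add: subspace_diff subspace_scale)
  have rx: "r \<bullet> (A *v x) = r \<bullet> r + l * (x \<bullet> r)"
    unfolding r_def by (simp add: inner_diff_right inner_diff_left inner_commute algebra_simps)
  have xAr: "x \<bullet> (A *v r) = r \<bullet> (A *v x)"
    using symmetric_matrix_inner[OF sym] inner_commute by metis
  \<comment> \<open>maximality along the line \<open>x + t r\<close> forces the linear term \<open>2 t |r|\<^sup>2\<close> to vanish\<close>
  have "2 * t * (r \<bullet> r) + t\<^sup>2 * (r \<bullet> (A *v r) - l * (r \<bullet> r)) \<le> 0" for t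
  proof -
    have "x + t *\<^sub>R r \<in> W"
      using W x r by (simp add: subspace_add subspace_scale)
    then have "(x + t *\<^sub>R r) \<bullet> (A *v (x + t *\<^sub>R r)) \<le> l * ((x + t *\<^sub>R r) \<bullet> (x + t *\<^sub>R r))"
      unfolding l_def by (rule max)
    moreover have "(x + t *\<^sub>R r) \<bullet> (A *v (x + t *\<^sub>R r))
        = l + 2 * t * (r \<bullet> r) + 2 * t * l * (x \<bullet> r) + t\<^sup>2 * (r \<bullet> (A *v r))"
      using xAr rx unfolding l_def
      by (simp add: matrix_vector_right_distrib matrix_vector_mult_scaleR inner_add_left
          inner_add_right power2_eq_square algebra_simps)
    moreover have "l * ((x + t *\<^sub>R r) \<bullet> (x + t *\<^sub>R r))
        = l + 2 * t * l * (x \<bullet> r) + t\<^sup>2 * l * (r \<bullet> r)"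
      using x(2) by (simp add: inner_add_left inner_add_right inner_commute[of r x]
          power2_eq_square algebra_simps)
    ultimately have "2 * t * (r \<bullet> r) + t\<^sup>2 * (r \<bullet> (A *v r)) - t\<^sup>2 * l * (r \<bullet> r) \<le> 0"
      by linarith
    then show ?thesis
      by (simp add: algebra_simps)
  qed
  then have "r \<bullet> r = 0"
    by (rule quadratic_nonpos_imp_linear_coeff_eq_0)
  then show ?thesis
    unfolding r_def l_def by simp
qed

lemma symmetric_matrix_eigenvector_orthogonal:
  fixes A :: "real^'n^'n" and B :: "(real^'n) set"
  assumes sym: "transpose A = A"
    and eig: "\<And>u. u \<in> B \<Longrightarrow> \<exists>c. A *v u = c *\<^sub>R u"
    and dim: "dim B < DIM(real^'n)"
  shows "\<exists>x. norm x = 1 \<and> (\<forall>u\<in>B. u \<bullet> x = 0) \<and> (\<exists>c. A *v x = c *\<^sub>R x)"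
proof -
  define W where "W = {x. \<forall>u\<in>B. orthogonal u x}"
  have W: "subspace W"
    unfolding W_def by (rule subspace_orthogonal_to_vectors)
  obtain a :: "real^'n" where a: "a \<noteq> 0" "span B \<subseteq> {x. a \<bullet> x = 0}"
    using lowdim_subset_hyperplane[OF dim] by blast
  have "a \<in> W"
    using a span_base unfolding W_def orthogonal_def by (fastforce simp: inner_commute)
  then obtain x where x: "x \<in> W" "x \<bullet> x = 1"
    and max: "\<And>z. z \<in> W \<Longrightarrow> z \<bullet> (A *v z) \<le> x \<bullet> (A *v x) * (z \<bullet> z)"
    using quadratic_form_attains_max_on_sphere[OF W _ a(1)] by blast
  have "A *v x \<in> W"
    unfolding W_def orthogonal_def
  proof safe
    fix u assume "u \<in> B"
    then obtain c where "A *v u = c *\<^sub>R u"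
      using eig by blast
    then show "u \<bullet> (A *v x) = 0"
      using x(1) \<open>u \<in> B\<close> symmetric_matrix_inner[OF sym, of u x]
      unfolding W_def orthogonal_def by simp
  qed
  then have "A *v x = (x \<bullet> (A *v x)) *\<^sub>R x"
    using symmetric_matrix_rayleigh_max_eigenvector[OF sym W x] max by blast
  moreover have "norm x = 1" "\<forall>u\<in>B. u \<bullet> x = 0"
    using x unfolding W_def orthogonal_def by (auto simp: norm_eq_1)
  ultimately show ?thesis
    by blast
qed

lemma symmetric_matrix_orthonormal_eigenbasis:
  fixes A :: "real^'n^'n"
  assumes sym: "transpose A = A"
  obtains B where "finite B" "pairwise orthogonal B" "span B = UNIV"
    "\<And>u. u \<in> B \<Longrightarrow> norm u = 1" "\<And>u. u \<in> B \<Longrightarrow> \<exists>c. A *v u = c *\<^sub>R u"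
proof -
  let ?eigenset = "\<lambda>B. finite B \<and> pairwise orthogonal B \<and> (\<forall>u\<in>B. norm u = 1 \<and> (\<exists>c. A *v u = c *\<^sub>R u))"
  have indep: "independent B" if "?eigenset B" for B
    using that pairwise_orthogonal_independent[of B] by force
  have "\<exists>B. ?eigenset B \<and> card B = m" if "m \<le> CARD('n)" for m
    using that
  proof (induction m)
    case 0
    show ?case
      by (intro exI[of _ "{}"]) auto
  next
    case (Suc m)
    then obtain B where B: "?eigenset B" "card B = m"
      by auto
    then have "dim B < DIM(real^'n)"
      using Suc.prems indep dim_eq_card_independent by fastforce
    then obtain x where x: "norm x = 1" "\<forall>u\<in>B. u \<bullet> x = 0" "\<exists>c. A *v x = c *\<^sub>R x"
      using symmetric_matrix_eigenvector_orthogonal[OF sym] B(1) by blast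
    have "x \<notin> B"
      using x by (metis inner_eq_zero_iff norm_zero zero_neq_one)
    moreover have "pairwise orthogonal (insert x B)"
      using B(1) x(2) by (auto simp: pairwise_insert orthogonal_def inner_commute)
    ultimately show ?case
      using B x by (intro exI[of _ "insert x B"]) auto
  qed
  then obtain B where B: "?eigenset B" "card B = DIM(real^'n)"
    by auto
  then have "span B = UNIV"
    using card_eq_dim[of B UNIV] indep by auto
  then show thesis
    using that B by blast
qed

lemma posdef_sqrt_on_eigenvector:
  fixes T :: "real^'n^'n"
  assumes T: "posdef T" and TT: "T *v (T *v u) = c *\<^sub>R u" and c: "0 \<le> c"
  shows "T *v u = sqrt c *\<^sub>R u"
proof -
  define s where "s = sqrt c"
  define w where "w = T *v u - s *\<^sub>R u"
  have s: "0 \<le> s" "s * s = c"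
    using c unfolding s_def by auto
  have Tw: "T *v w = - (s *\<^sub>R w)"
    unfolding w_def using TT s(2)
    by (simp add: matrix_vector_mult_diff_distrib matrix_vector_mult_scaleR algebra_simps)
  have "w = 0"
  proof (rule ccontr)
    assume "w \<noteq> 0"
    then have "0 < w \<bullet> (T *v w)"
      using T posdef_def by blast
    also have "\<dots> = - (s * (w \<bullet> w))"
      using Tw by simp
    also have "\<dots> \<le> 0"
      using s(1) by simp
    finally show False
      by simp
  qed
  then show ?thesis
    unfolding w_def s_def by simp
qed

lemma orthonormal_basis_posdef_matrix:
  fixes B :: "(real^'n) set" and w :: "real^'n \<Rightarrow> real"
  assumes B: "finite B" "pairwise orthogonal B" "span B = UNIV" "\<And>u. u \<in> B \<Longrightarrow> norm u = 1"
    and w: "\<And>u. u \<in> B \<Longrightarrow> 0 < w u"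
  obtains S where "posdef S" "\<And>u. u \<in> B \<Longrightarrow> S *v u = w u *\<^sub>R u"
proof -
  define g where "g x = (\<Sum>u\<in>B. (w u * (u \<bullet> x)) *\<^sub>R u)" for x
  have "linear g"
    unfolding g_def
    by (rule linearI) (simp_all add: inner_add_right distrib_left scaleR_add_left sum.distrib
        scaleR_sum_right algebra_simps)
  then have Sx: "matrix g *v x = g x" for x
    by (simp add: matrix_works)
  have inner_Sx: "y \<bullet> (matrix g *v x) = (\<Sum>u\<in>B. w u * (u \<bullet> x) * (u \<bullet> y))" for x y
    unfolding Sx g_def by (simp add: inner_sum_right inner_commute)
  have "transpose (matrix g) = matrix g"
    by (rule symmetric_matrix_if_inner) (simp add: inner_Sx inner_commute mult_ac)
  moreover have "x \<bullet> (matrix g *v x) > 0" if "x \<noteq> 0" for x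
  proof -
    obtain u where u: "u \<in> B" "u \<bullet> x \<noteq> 0"
      using orthogonal_to_span[of x B x] B(3) \<open>x \<noteq> 0\<close>
      by (auto simp: orthogonal_def inner_commute)
    have "0 < (\<Sum>u\<in>B. w u * (u \<bullet> x)\<^sup>2)"
      using u w B(1) by (intro sum_pos2[of B u]) (auto intro!: mult_pos_pos simp: less_imp_le)
    then show ?thesis
      by (simp add: inner_Sx power2_eq_square mult.assoc)
  qed
  moreover have "matrix g *v v = w v *\<^sub>R v" if v: "v \<in> B" for v
  proof -
    have "u \<bullet> v = (if u = v then 1 else 0)" if "u \<in> B" for u
      using B(2,4) v that unfolding pairwise_def orthogonal_def by (auto simp: norm_eq_1)
    then have "g v = (\<Sum>u\<in>B. if u = v then w v *\<^sub>R v else 0)"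
      unfolding g_def by (intro sum.cong) auto
    then show ?thesis
      using B(1) v by (simp add: Sx)
  qed
  ultimately show thesis
    using that posdef_def by blast
qed

lemma posdef_sqrt_ex1:
  fixes A :: "real^'n^'n"
  assumes pd: "posdef A"
  shows "\<exists>!S. posdef S \<and> S ** S = A"
proof -
  obtain B where B: "finite B" "pairwise orthogonal B" "span B = UNIV" "\<And>u. u \<in> B \<Longrightarrow> norm u = 1"
    and eig: "\<And>u. u \<in> B \<Longrightarrow> \<exists>c. A *v u = c *\<^sub>R u"
    using symmetric_matrix_orthonormal_eigenbasis pd posdef_def by metis
  define lam where "lam u = u \<bullet> (A *v u)" for u
  have Au: "A *v u = lam u *\<^sub>R u" if "u \<in> B" for u
    using eig[OF that] B(4)[OF that] unfolding lam_def by (auto simp: norm_eq_1)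
  have lam: "0 < lam u" if "u \<in> B" for u
    using pd B(4)[OF that] unfolding posdef_def lam_def by (metis norm_zero zero_neq_one)
  obtain S where S: "posdef S" and Su: "\<And>u. u \<in> B \<Longrightarrow> S *v u = sqrt (lam u) *\<^sub>R u"
    using orthonormal_basis_posdef_matrix[OF B, of "\<lambda>u. sqrt (lam u)"] lam by auto
  have root: "T *v u = S *v u" if "posdef T" "T ** T = A" "u \<in> B" for T u
    using posdef_sqrt_on_eigenvector[of T u "lam u"] that lam[of u] Au[of u] Su[of u]
    by (simp add: matrix_vector_mul_assoc less_imp_le)
  have "(S ** S) *v u = A *v u" if "u \<in> B" for u
    using Su[OF that] Au[OF that] lam[OF that]
    by (simp add: matrix_vector_mul_assoc[symmetric] matrix_vector_mult_scaleR)
  then have "S ** S = A"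
    using B(3) by (rule matrix_eq_on_spanning_set[rotated])
  then show ?thesis
    using S root B(3) by (metis matrix_eq_on_spanning_set)
qed

lemma msqrt_spec:
  fixes A :: "real^'n^'n"
  assumes "posdef A"
  shows posdef_msqrt: "posdef (msqrt A)" and msqrt_square: "msqrt A ** msqrt A = A"
  using theI'[OF posdef_sqrt_ex1[OF assms]] unfolding msqrt_def by auto

lemma msqrt_unique:
  fixes A S :: "real^'n^'n"
  assumes "posdef A" "posdef S" "S ** S = A"
  shows "msqrt A = S"
  unfolding msqrt_def using assms by (intro the1_equality posdef_sqrt_ex1) auto

lemma posdef_inner_square_le:
  fixes M :: "real^'n^'n"
  assumes pd: "posdef M"
  shows "(x \<bullet> y)\<^sup>2 \<le> (x \<bullet> (M *v x)) * (y \<bullet> (matrix_inv M *v y))"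
proof -
  define S where "S = msqrt M"
  define T where "T = matrix_inv S"
  have S: "posdef S" "S ** S = M"
    unfolding S_def using posdef_msqrt[OF pd] msqrt_square[OF pd] .
  have symS: "transpose S = S" and symT: "transpose T = T"
    using S(1) posdef_matrix_inv[OF S(1)] unfolding T_def posdef_def by auto
  have ST: "S ** T = mat 1"
    unfolding T_def using matrix_inv_right[OF posdef_imp_invertible[OF S(1)]] .
  have "M ** (T ** T) = S ** (S ** T) ** T"
    using S(2) by (simp add: matrix_mul_assoc)
  then have invM: "matrix_inv M = T ** T"
    using ST by (intro matrix_inv_unique) simp
  have "x \<bullet> y = x \<bullet> (S *v (T *v y))"
    using ST by (simp add: matrix_vector_mul_assoc)
  also have "\<dots> = (S *v x) \<bullet> (T *v y)"
    by (rule symmetric_matrix_inner[OF symS])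
  finally have "(x \<bullet> y)\<^sup>2 \<le> ((S *v x) \<bullet> (S *v x)) * ((T *v y) \<bullet> (T *v y))"
    using Cauchy_Schwarz_ineq by metis
  also have "(S *v x) \<bullet> (S *v x) = x \<bullet> (M *v x)"
    using symmetric_matrix_inner[OF symS, of x "S *v x"] S(2)
    by (simp add: matrix_vector_mul_assoc)
  also have "(T *v y) \<bullet> (T *v y) = y \<bullet> (matrix_inv M *v y)"
    using symmetric_matrix_inner[OF symT, of y "T *v y"] invM
    by (simp add: matrix_vector_mul_assoc)
  finally show ?thesis .
qed

section \<open>Block-diagonal parts and block sign changes\<close>

lemma quadratic_form_expand:
  fixes M :: "real^'n^'n"
  shows "x \<bullet> (M *v y) = (\<Sum>i\<in>UNIV. \<Sum>j\<in>UNIV. x $ i * M $ i $ j * y $ j)"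
  by (simp add: inner_vec_def matrix_vector_mult_def sum_distrib_left mult.assoc)

definition block_part :: "('n \<Rightarrow> 'b) \<Rightarrow> 'b \<Rightarrow> real^'n \<Rightarrow> real^'n" where
  "block_part blk c x = (\<chi> i. if blk i = c then x $ i else 0)"

lemma blockdiag_quadratic_form:
  fixes Q :: "real^'n^'n" and blk :: "'n \<Rightarrow> 'b"
  shows "x \<bullet> (blockdiag blk Q *v x) = (\<Sum>c\<in>range blk. block_part blk c x \<bullet> (Q *v block_part blk c x))"
proof -
  have same_block: "(\<Sum>c\<in>range blk. if blk i = c \<and> blk j = c then t else 0)
      = (if blk i = blk j then t else (0::real))" for i j t
    by (simp add: sum.delta eq_commute conj_commute[of "blk i = _"] cong: conj_cong)
  have "(\<Sum>c\<in>range blk. block_part blk c x \<bullet> (Q *v block_part blk c x))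
      = (\<Sum>c\<in>range blk. \<Sum>i\<in>UNIV. \<Sum>j\<in>UNIV.
           if blk i = c \<and> blk j = c then x $ i * Q $ i $ j * x $ j else 0)"
    unfolding quadratic_form_expand block_part_def by (intro sum.cong refl) auto
  also have "\<dots> = (\<Sum>i\<in>UNIV. \<Sum>j\<in>UNIV. \<Sum>c\<in>range blk.
           if blk i = c \<and> blk j = c then x $ i * Q $ i $ j * x $ j else 0)"
    by (rule trans[OF sum.swap], intro sum.cong refl sum.swap)
  also have "\<dots> = x \<bullet> (blockdiag blk Q *v x)"
    unfolding same_block quadratic_form_expand blockdiag_def by (intro sum.cong refl) auto
  finally show ?thesis
    by simp
qed

lemma transpose_blockdiag:
  fixes Q :: "real^'n^'n"
  assumes "transpose Q = Q"
  shows "transpose (blockdiag blk Q) = blockdiag blk Q"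
  using assms unfolding blockdiag_def transpose_def by (simp add: vec_eq_iff)

lemma posdef_blockdiag:
  fixes Q :: "real^'n^'n" and blk :: "'n \<Rightarrow> 'b"
  assumes pd: "posdef Q"
  shows "posdef (blockdiag blk Q)"
proof -
  have "x \<bullet> (blockdiag blk Q *v x) > 0" if "x \<noteq> 0" for x
  proof -
    obtain i where i: "x $ i \<noteq> 0"
      using \<open>x \<noteq> 0\<close> by (auto simp: vec_eq_iff)
    then have "block_part blk (blk i) x \<noteq> 0"
      by (auto simp: block_part_def vec_eq_iff)
    then have "0 < block_part blk (blk i) x \<bullet> (Q *v block_part blk (blk i) x)"
      using pd posdef_def by blast
    then show ?thesis
      unfolding blockdiag_quadratic_form
      by (intro sum_pos2[of _ "blk i"]) (auto intro: posdef_quadratic_nonneg[OF pd])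
  qed
  then show ?thesis
    using transpose_blockdiag pd posdef_def by blast
qed

lemma blockdiag_quadratic_form_on_block:
  fixes Q :: "real^'n^'n" and blk :: "'n \<Rightarrow> 'b"
  assumes y: "\<forall>i. blk i \<noteq> c \<longrightarrow> y $ i = 0"
  shows "y \<bullet> (blockdiag blk Q *v y) = y \<bullet> (Q *v y)"
  unfolding quadratic_form_expand
proof (intro sum.cong refl)
  fix i j
  show "y $ i * blockdiag blk Q $ i $ j * y $ j = y $ i * Q $ i $ j * y $ j"
    using y by (cases "blk i = c"; cases "blk j = c") (auto simp: blockdiag_def)
qed

definition flip_sign :: "('n \<Rightarrow> 'b) \<Rightarrow> 'b \<Rightarrow> 'n \<Rightarrow> real" where
  "flip_sign blk c i = (if blk i = c then -1 else 1)"

definition block_flip :: "('n \<Rightarrow> 'b) \<Rightarrow> 'b \<Rightarrow> real^'n^'n" where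
  "block_flip blk c = (\<chi> i j. if i = j then flip_sign blk c i else 0)"

lemma block_flip_mult_vector:
  "(block_flip blk c *v x) $ i = flip_sign blk c i * x $ i"
  by (simp add: block_flip_def matrix_vector_mult_def if_distrib if_distribR sum.delta cong: if_cong)

lemma block_flip_conj:
  "(block_flip blk c ** M ** block_flip blk c) $ i $ j = flip_sign blk c i * M $ i $ j * flip_sign blk c j"
  by (simp add: block_flip_def matrix_matrix_mult_def if_distrib if_distribR sum.delta cong: if_cong)

lemma block_flip_square: "block_flip blk c ** block_flip blk c = mat 1"
proof -
  have "block_flip blk c ** mat 1 ** block_flip blk c = mat 1"
    unfolding vec_eq_iff block_flip_conj by (simp add: mat_def flip_sign_def)
  then show ?thesis
    by simp
qed

lemma transpose_block_flip: "transpose (block_flip blk c) = block_flip blk c"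
  by (simp add: vec_eq_iff block_flip_def transpose_def)

lemma block_flip_conj_blockdiag:
  "block_flip blk c ** blockdiag blk Q ** block_flip blk c = blockdiag blk Q"
  by (simp add: vec_eq_iff block_flip_conj blockdiag_def flip_sign_def)

lemma matrix_inv_conj_involution:
  fixes R D :: "real^'n^'n"
  assumes R: "R ** R = mat 1" and D: "invertible D" "R ** D ** R = D"
  shows "R ** matrix_inv D ** R = matrix_inv D"
proof -
  have "D ** (R ** matrix_inv D ** R) = (R ** D ** R) ** (R ** matrix_inv D ** R)"
    using D(2) by simp
  also have "\<dots> = R ** (D ** (R ** R) ** matrix_inv D) ** R"
    by (simp add: matrix_mul_assoc)
  also have "\<dots> = mat 1"
    using R matrix_inv_right[OF D(1)] by (simp add: matrix_mul_assoc)
  finally show ?thesis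
    by (rule matrix_inv_unique[symmetric])
qed

lemma msqrt_conj_involution:
  fixes R P :: "real^'n^'n"
  assumes R: "transpose R = R" "R ** R = mat 1" and P: "posdef P" "R ** P ** R = P"
  shows "R ** msqrt P ** R = msqrt P"
proof -
  let ?S = "msqrt P"
  have S: "posdef ?S" "?S ** ?S = P"
    using posdef_msqrt[OF P(1)] msqrt_square[OF P(1)] .
  have "x \<bullet> ((R ** ?S ** R) *v x) > 0" if "x \<noteq> 0" for x
  proof -
    have "R *v (R *v x) = x"
      using R(2) by (simp add: matrix_vector_mul_assoc)
    then have "R *v x \<noteq> 0"
      using that by auto
    then have "0 < (R *v x) \<bullet> (?S *v (R *v x))"
      using S(1) posdef_def by blast
    also have "\<dots> = x \<bullet> (R *v (?S *v (R *v x)))"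
      by (rule symmetric_matrix_inner[OF R(1), symmetric])
    finally show ?thesis
      by (simp only: matrix_vector_mul_assoc3)
  qed
  moreover have "transpose (R ** ?S ** R) = R ** ?S ** R"
    using S(1) R(1) by (simp add: posdef_def matrix_transpose_mul matrix_mul_assoc)
  moreover have "(R ** ?S ** R) ** (R ** ?S ** R) = R ** (?S ** (R ** R) ** ?S) ** R"
    by (simp add: matrix_mul_assoc)
  ultimately have "posdef (R ** ?S ** R)" "(R ** ?S ** R) ** (R ** ?S ** R) = P"
    using S(2) R(2) P(2) by (simp_all add: posdef_def)
  then have "msqrt P = R ** ?S ** R"
    by (rule msqrt_unique[OF P(1)])
  then show ?thesis
    by simp
qed

lemma block_flip_invariant_preserves_block:
  fixes M :: "real^'n^'n" and blk :: "'n \<Rightarrow> 'b"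
  assumes M: "block_flip blk c ** M ** block_flip blk c = M"
    and a: "\<forall>i. blk i \<noteq> c \<longrightarrow> a $ i = 0"
  shows "\<forall>i. blk i \<noteq> c \<longrightarrow> (M *v a) $ i = 0"
proof (intro allI impI)
  fix i assume "blk i \<noteq> c"
  let ?R = "block_flip blk c"
  have Ra: "?R *v a = - a"
    using a by (auto simp: vec_eq_iff block_flip_mult_vector flip_sign_def)
  have "M *v a = ?R *v (M *v (?R *v a))"
    using M matrix_vector_mul_assoc3[of ?R M ?R a] by simp
  also have "\<dots> = - (?R *v (M *v a))"
    using Ra matrix_vector_mult_diff_distrib[of M 0 a] matrix_vector_mult_diff_distrib[of ?R 0 "M *v a"]
    by simp
  finally have "(M *v a) $ i = - (?R *v (M *v a)) $ i"
    by (metis vector_uminus_component)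
  also have "\<dots> = - (M *v a) $ i"
    using \<open>blk i \<noteq> c\<close> by (simp add: block_flip_mult_vector flip_sign_def)
  finally show "(M *v a) $ i = 0"
    by simp
qed

lemma msqrt_inv_blockdiag_preserves_block:
  fixes Q :: "real^'n^'n" and blk :: "'n \<Rightarrow> 'b"
  assumes pd: "posdef Q" and a: "\<forall>i. blk i \<noteq> c \<longrightarrow> a $ i = 0"
  shows "\<forall>i. blk i \<noteq> c \<longrightarrow> (msqrt (matrix_inv (blockdiag blk Q)) *v a) $ i = 0"
proof -
  let ?D = "blockdiag blk Q" and ?R = "block_flip blk c"
  have D: "posdef ?D"
    using posdef_blockdiag[OF pd] .
  have "?R ** matrix_inv ?D ** ?R = matrix_inv ?D"
    using matrix_inv_conj_involution[OF block_flip_square posdef_imp_invertible[OF D]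
        block_flip_conj_blockdiag] .
  then have "?R ** msqrt (matrix_inv ?D) ** ?R = msqrt (matrix_inv ?D)"
    by (rule msqrt_conj_involution[OF transpose_block_flip block_flip_square posdef_matrix_inv[OF D]])
  then show ?thesis
    using a by (rule block_flip_invariant_preserves_block)
qed

lemma msqrt_inv_sandwich:
  fixes D :: "real^'n^'n"
  assumes pd: "posdef D"
  shows "msqrt (matrix_inv D) ** D ** msqrt (matrix_inv D) = mat 1"
proof -
  let ?S = "msqrt (matrix_inv D)"
  have S: "posdef ?S" "?S ** ?S = matrix_inv D"
    using posdef_msqrt msqrt_square posdef_matrix_inv[OF pd] by auto
  have invS: "?S ** matrix_inv ?S = mat 1"
    using matrix_inv_right[OF posdef_imp_invertible[OF S(1)]] .
  have "?S ** D ** ?S = (?S ** D ** ?S) ** (?S ** matrix_inv ?S)"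
    using invS by simp
  also have "\<dots> = ?S ** (D ** (?S ** ?S)) ** matrix_inv ?S"
    by (simp add: matrix_mul_assoc)
  also have "\<dots> = mat 1"
    using S(2) matrix_inv_right[OF posdef_imp_invertible[OF pd]] invS by simp
  finally show ?thesis .
qed

lemma normalised_quadratic_form_on_block:
  fixes Q :: "real^'n^'n" and blk :: "'n \<Rightarrow> 'b"
  defines "S \<equiv> msqrt (matrix_inv (blockdiag blk Q))"
  assumes pd: "posdef Q" and y: "\<forall>i. blk i \<noteq> c \<longrightarrow> y $ i = 0"
  shows "y \<bullet> ((S ** Q ** S) *v y) = y \<bullet> y"
proof -
  have symS: "transpose S = S"
    using posdef_msqrt[OF posdef_matrix_inv[OF posdef_blockdiag[OF pd]]]
    unfolding S_def posdef_def by blast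
  have "y \<bullet> ((S ** Q ** S) *v y) = (S *v y) \<bullet> (Q *v (S *v y))"
    unfolding matrix_vector_mul_assoc3 by (rule symmetric_matrix_inner[OF symS])
  also have "\<dots> = (S *v y) \<bullet> (blockdiag blk Q *v (S *v y))"
    unfolding S_def
    by (rule blockdiag_quadratic_form_on_block[OF msqrt_inv_blockdiag_preserves_block[OF pd y], symmetric])
  also have "\<dots> = y \<bullet> ((S ** blockdiag blk Q ** S) *v y)"
    unfolding matrix_vector_mul_assoc3 by (rule symmetric_matrix_inner[OF symS, symmetric])
  also have "\<dots> = y \<bullet> y"
    unfolding S_def using msqrt_inv_sandwich[OF posdef_blockdiag[OF pd, of blk]] by simp
  finally show ?thesis .
qed

lemma inner_eq_0_if_disjoint_blocks:
  fixes x y :: "real^'n" and blk :: "'n \<Rightarrow> 'b"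
  assumes "k \<noteq> l" "\<forall>i. blk i \<noteq> k \<longrightarrow> x $ i = 0" "\<forall>i. blk i \<noteq> l \<longrightarrow> y $ i = 0"
  shows "x \<bullet> y = 0"
  unfolding inner_vec_def using assms by (intro sum.neutral) (metis inner_real_def mult_zero_left mult_zero_right)

section \<open>The uncertainty quantification fraction\<close>

lemma UQF_le_variance_ratio:
  fixes Sq Sp :: "real^'n^'n"
  assumes "posdef Sq" "posdef Sp" "v \<noteq> 0"
  shows "UQF (gaussian m Sq) (gaussian m' Sp) \<le> (v \<bullet> (Sq *v v)) / (v \<bullet> (Sp *v v))"
proof -
  have "bdd_below {gvar (gaussian m Sq) w / gvar (gaussian m' Sp) w | w. w \<noteq> 0}"
    using assms(1,2)
    by (intro bdd_belowI[of _ 0]) (auto simp: gvar_def gaussian_def intro!: divide_nonneg_nonneg posdef_quadratic_nonneg)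
  then show ?thesis
    unfolding UQF_def using assms(3) by (intro cInf_lower) (auto simp: gvar_def gaussian_def)
qed

lemma UQF_le_normalised_rayleigh_quotient:
  fixes Q :: "real^'n^'n" and blk :: "'n \<Rightarrow> 'b"
  defines "S \<equiv> msqrt (matrix_inv (blockdiag blk Q))"
  assumes pd: "posdef Q" and u: "u \<noteq> 0"
  shows "UQF (gaussian mu' (matrix_inv (blockdiag blk Q))) (gaussian mu (matrix_inv Q))
    \<le> u \<bullet> ((S ** Q ** S) *v u) / (u \<bullet> u)"
proof -
  have Di: "posdef (matrix_inv (blockdiag blk Q))"
    using posdef_matrix_inv[OF posdef_blockdiag[OF pd]] .
  have S: "posdef S" "S ** S = matrix_inv (blockdiag blk Q)"
    unfolding S_def using posdef_msqrt[OF Di] msqrt_square[OF Di] .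
  have symS: "transpose S = S"
    using S(1) posdef_def by blast
  define v where "v = matrix_inv S *v u"
  have Sv: "S *v v = u"
    unfolding v_def using matrix_inv_right[OF posdef_imp_invertible[OF S(1)]]
    by (simp add: matrix_vector_mul_assoc)
  then have "v \<noteq> 0"
    using u by auto
  have "v \<bullet> (matrix_inv (blockdiag blk Q) *v v) = v \<bullet> (S *v (S *v v))"
    using S(2) by (simp add: matrix_vector_mul_assoc)
  also have "\<dots> = (S *v v) \<bullet> (S *v v)"
    by (rule symmetric_matrix_inner[OF symS])
  finally have var_q: "v \<bullet> (matrix_inv (blockdiag blk Q) *v v) = u \<bullet> u"
    using Sv by simp
  have var_p: "0 < v \<bullet> (matrix_inv Q *v v)"
    using posdef_matrix_inv[OF pd] \<open>v \<noteq> 0\<close> posdef_def by blast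
  have "(S *v u) \<bullet> v = u \<bullet> u"
    using symmetric_matrix_inner[OF symS, of u v] Sv by simp
  moreover have "(S *v u) \<bullet> (Q *v (S *v u)) = u \<bullet> ((S ** Q ** S) *v u)"
    unfolding matrix_vector_mul_assoc3 by (rule symmetric_matrix_inner[OF symS, symmetric])
  ultimately
  have cs: "(u \<bullet> u)\<^sup>2 \<le> u \<bullet> ((S ** Q ** S) *v u) * (v \<bullet> (matrix_inv Q *v v))"
    using posdef_inner_square_le[OF pd, of "S *v u" v] by simp
  have "UQF (gaussian mu' (matrix_inv (blockdiag blk Q))) (gaussian mu (matrix_inv Q))
      \<le> (u \<bullet> u) / (v \<bullet> (matrix_inv Q *v v))"
    using UQF_le_variance_ratio[OF Di posdef_matrix_inv[OF pd] \<open>v \<noteq> 0\<close>] var_q by simp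
  also have "\<dots> \<le> u \<bullet> ((S ** Q ** S) *v u) / (u \<bullet> u)"
    using cs var_p u by (simp add: divide_le_eq le_divide_eq power2_eq_square mult.commute)
  finally show ?thesis .
qed

lemma normalised_rayleigh_quotient_block_difference:
  fixes Q :: "real^'n^'n" and blk :: "'n \<Rightarrow> 'b"
  defines "S \<equiv> msqrt (matrix_inv (blockdiag blk Q))"
  assumes pd: "posdef Q" and "k \<noteq> l"
    and a: "\<forall>i. blk i \<noteq> k \<longrightarrow> a $ i = 0" "norm a = 1"
    and b: "\<forall>i. blk i \<noteq> l \<longrightarrow> b $ i = 0" "norm b = 1"
  shows "a - b \<noteq> 0"
    and "(a - b) \<bullet> ((S ** Q ** S) *v (a - b)) / ((a - b) \<bullet> (a - b)) = 1 - a \<bullet> ((S ** Q ** S) *v b)"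
proof -
  have symS: "transpose S = S"
    using posdef_msqrt[OF posdef_matrix_inv[OF posdef_blockdiag[OF pd]]]
    unfolding S_def posdef_def by blast
  then have "transpose (S ** Q ** S) = S ** Q ** S"
    using pd by (simp add: posdef_def matrix_transpose_mul matrix_mul_assoc)
  then have "b \<bullet> ((S ** Q ** S) *v a) = a \<bullet> ((S ** Q ** S) *v b)"
    using symmetric_matrix_inner inner_commute by metis
  moreover have "a \<bullet> b = 0"
    using inner_eq_0_if_disjoint_blocks[OF \<open>k \<noteq> l\<close> a(1) b(1)] .
  moreover have "a \<bullet> ((S ** Q ** S) *v a) = 1" "b \<bullet> ((S ** Q ** S) *v b) = 1"
    using normalised_quadratic_form_on_block[OF pd a(1)] normalised_quadratic_form_on_block[OF pd b(1)]
      a(2) b(2) unfolding S_def by (simp_all add: norm_eq_1)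
  ultimately have "(a - b) \<bullet> (a - b) = 2"
    and "(a - b) \<bullet> ((S ** Q ** S) *v (a - b)) = 2 - 2 * (a \<bullet> ((S ** Q ** S) *v b))"
    using a(2) b(2)
    by (simp_all add: norm_eq_1 matrix_vector_mult_diff_distrib inner_diff_left inner_diff_right inner_commute[of b a])
  then show "a - b \<noteq> 0" and "(a - b) \<bullet> ((S ** Q ** S) *v (a - b)) / ((a - b) \<bullet> (a - b))
      = 1 - a \<bullet> ((S ** Q ** S) *v b)"
    by auto
qed

theorem mainTheorem7:
  fixes Q :: "real^'n^'n" and mu mu' :: "real^'n" and blk :: "'n \<Rightarrow> 'b"
    and k l :: 'b and vk vl :: "real^'n"
  assumes "posdef Q"
    and "k \<noteq> l"
    and "vk \<noteq> 0" and "vl \<noteq> 0"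
    and "\<forall>i. blk i \<noteq> k \<longrightarrow> vk $ i = 0"
    and "\<forall>i. blk i \<noteq> l \<longrightarrow> vl $ i = 0"
  shows "UQF (gaussian mu' (matrix_inv (blockdiag blk Q))) (gaussian mu (matrix_inv Q))
    \<le> 1 - (vk \<bullet> ((msqrt (matrix_inv (blockdiag blk Q)) ** Q ** msqrt (matrix_inv (blockdiag blk Q))) *v vl))
          / (norm vk * norm vl)"
proof -
  let ?Qbar = "msqrt (matrix_inv (blockdiag blk Q)) ** Q ** msqrt (matrix_inv (blockdiag blk Q))"
  define a where "a = vk /\<^sub>R norm vk"
  define b where "b = vl /\<^sub>R norm vl"
  have a: "\<forall>i. blk i \<noteq> k \<longrightarrow> a $ i = 0" "norm a = 1"
    using assms(3,5) unfolding a_def by auto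
  have b: "\<forall>i. blk i \<noteq> l \<longrightarrow> b $ i = 0" "norm b = 1"
    using assms(4,6) unfolding b_def by auto
  note quotient = normalised_rayleigh_quotient_block_difference[OF assms(1,2) a b]
  have "UQF (gaussian mu' (matrix_inv (blockdiag blk Q))) (gaussian mu (matrix_inv Q))
      \<le> (a - b) \<bullet> (?Qbar *v (a - b)) / ((a - b) \<bullet> (a - b))"
    by (rule UQF_le_normalised_rayleigh_quotient[OF assms(1) quotient(1)])
  also have "\<dots> = 1 - a \<bullet> (?Qbar *v b)"
    by (rule quotient(2))
  also have "a \<bullet> (?Qbar *v b) = (vk \<bullet> (?Qbar *v vl)) / (norm vk * norm vl)"
    unfolding a_def b_def by (simp add: matrix_vector_mult_scaleR divide_inverse mult_ac)
  finally show ?thesis .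
qed

end
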